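(* Let $G$ be a group, $H$ a subgroup, $A$ a complex vector space, and let $g,g_1,\dots,g_n:G\to A$ and $f_1,\dots,f_n:G\to\mathbb C$ be functions such that $\chi_H(xy)g(y)=\sum_{i=1}^n f_i(x)g_i(y)$ for all $x,y\in G$. Then there is a finite set $F\subseteq G$ such that $g(y)=0$ for all $y\notin FH$.
   Context: $\chi_H$ is the characteristic function of $H$. *)

theory Defs
  imports Complex_Main "HOL-Library.Indicator_Function" "HOL-Algebra.Coset"
begin

end

theory Submission
  imports Defs "HOL-Algebra.Left_Coset"
begin

(* If y_0, ..., y_n lie in distinct left cosets of H and g does not vanish at any
   of them, then the n + 1 vectors (f_i(y_k^-1))_i in C^n are linearly dependent, say
   sum_k c_k f_i(y_k^-1) = 0 for all i with c_j \<noteq> 0. Putting x = y_k^-1, y = y_j in the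
   hypothesis and summing with the weights c_k, the left side collapses to c_j g(y_j) because
   y_k^-1 y_j \<in> H only for k = j, while the right side vanishes. So the support of g meets at
   most n left cosets. *)

lemma homogeneous_system_nontrivial_solution:
  fixes a :: "'k \<Rightarrow> 'i \<Rightarrow> 'f :: field"
  assumes "finite I" "finite K" "card I < card K"
  shows "\<exists>c. (\<exists>k\<in>K. c k \<noteq> 0) \<and> (\<forall>i\<in>I. (\<Sum>k\<in>K. c k * a k i) = 0)"
  using assms
proof (induction I arbitrary: K a rule: finite_induct)
  case empty
  then show ?case by (intro exI[of _ "\<lambda>_. 1"]) (auto simp: card_gt_0_iff)
next
  case (insert i I)
  have card_I: "card I < card K" and card_I': "card I < card K - 1"
    using insert by auto
  show ?case
  proof (cases "\<forall>k\<in>K. a k i = 0")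
    case True
    then show ?thesis using insert.IH[OF \<open>finite K\<close> card_I, of a] by auto
  next
    case False
    then obtain p where p: "p \<in> K" "a p i \<noteq> 0" by blast
    define K' where "K' = K - {p}"
    \<comment> \<open>Eliminate equation i with the pivot p; a solution of the reduced system on K - {p}
      extends to K by choosing c p so that equation i holds.\<close>
    define b where "b k j = a k j - a k i / a p i * a p j" for k j
    obtain c' where c': "\<exists>k\<in>K'. c' k \<noteq> 0" "\<forall>j\<in>I. (\<Sum>k\<in>K'. c' k * b k j) = 0"
      using insert.IH[of K' b] insert.prems card_I' p by (auto simp: K'_def)
    define c where "c = c'(p := - (\<Sum>k\<in>K'. c' k * a k i) / a p i)"
    have K: "K = insert p K'" "p \<notin> K'" "finite K'"
      using p insert.prems by (auto simp: K'_def)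
    have eliminated: "(\<Sum>k\<in>K. c k * a k j) = (\<Sum>k\<in>K'. c' k * b k j)" for j
    proof -
      have "(\<Sum>k\<in>K'. c k * a k j) = (\<Sum>k\<in>K'. c' k * a k j)"
        using K(2) by (intro sum.cong) (auto simp: c_def)
      then show ?thesis
        using K p(2)
        by (simp add: c_def b_def algebra_simps sum_subtractf sum_distrib_left
            sum_distrib_right flip: sum_divide_distrib)
    qed
    have "b k i = 0" for k
      using p(2) by (simp add: b_def)
    then have "\<forall>j\<in>insert i I. (\<Sum>k\<in>K. c k * a k j) = 0"
      using c'(2) by (simp add: eliminated)
    moreover have "\<exists>k\<in>K. c k \<noteq> 0"
      using c'(1) K by (auto simp: c_def)
    ultimately show ?thesis by blast
  qed
qed

lemma finite_image_if_inj_on_subsets_card_bounded: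
  assumes "\<And>K. K \<subseteq> S \<Longrightarrow> finite K \<Longrightarrow> inj_on f K \<Longrightarrow> card K \<le> n"
  shows "finite (f ` S)"
proof (rule ccontr)
  assume "infinite (f ` S)"
  then obtain T where T: "T \<subseteq> f ` S" "finite T" "card T = Suc n"
    using infinite_arbitrarily_large by blast
  let ?K = "inv_into S f ` T"
  have "inj_on f ?K"
  proof (rule inj_onI)
    fix x y assume "x \<in> ?K" "y \<in> ?K" "f x = f y"
    then show "x = y"
      using T(1) by (auto simp: f_inv_into_f subset_iff)
  qed
  moreover have "card ?K = Suc n"
    using T by (simp add: card_image inj_on_inv_into)
  moreover have "?K \<subseteq> S"
    using T(1) by (auto intro: inv_into_into)
  ultimately show False
    using assms[of ?K] T(2) by simp
qed

lemma (in group) l_coset_eqI: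
  assumes "subgroup H G" "x \<in> carrier G" "y \<in> carrier G" "inv x \<otimes> y \<in> H"
  shows "x <# H = y <# H"
  using assms subgroup.lcos_module_rev[OF assms(1) is_group] l_repr_independence by blast

lemma (in group) finite_l_coset_representatives:
  assumes "subgroup H G" "S \<subseteq> carrier G" "finite ((\<lambda>y. y <# H) ` S)"
  shows "\<exists>F. finite F \<and> F \<subseteq> S \<and> S \<subseteq> F <#> H"
proof (intro exI conjI)
  let ?rep = "inv_into S (\<lambda>y. y <# H)"
  show "finite (?rep ` (\<lambda>y. y <# H) ` S)" "?rep ` (\<lambda>y. y <# H) ` S \<subseteq> S"
    using assms(3) by (auto simp: inv_into_into)
  show "S \<subseteq> ?rep ` (\<lambda>y. y <# H) ` S <#> H"
  proof
    fix y assume y: "y \<in> S"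
    then have "y \<in> ?rep (y <# H) <# H"
      using assms(1,2) lcos_self f_inv_into_f[of "y <# H" "\<lambda>y. y <# H" S] by auto
    also have "\<dots> = {?rep (y <# H)} <#> H"
      by (rule l_coset_eq_set_mult)
    also have "\<dots> \<subseteq> ?rep ` (\<lambda>y. y <# H) ` S <#> H"
      using y by (intro mono_set_mult) auto
    finally show "y \<in> ?rep ` (\<lambda>y. y <# H) ` S <#> H" .
  qed
qed

lemma (in group) card_support_in_distinct_l_cosets_le:
  fixes scale :: "complex \<Rightarrow> 'v :: ab_group_add \<Rightarrow> 'v"
    and fs :: "'i \<Rightarrow> 'a \<Rightarrow> complex"
  assumes "vector_space scale" and H: "subgroup H G"
    and expansion: "\<forall>x\<in>carrier G. \<forall>y\<in>carrier G.
           scale (indicator H (x \<otimes> y)) (g y) = (\<Sum>i\<in>I. scale (fs i x) (gs i y))"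
    and "finite I" "finite K" and K_carrier: "K \<subseteq> carrier G"
    and nonzero: "\<forall>k\<in>K. g k \<noteq> 0"
    and distinct_cosets: "inj_on (\<lambda>y. y <# H) K"
  shows "card K \<le> card I"
proof (rule ccontr)
  interpret V: vector_space scale by fact
  assume "\<not> card K \<le> card I"
  then obtain c where c: "\<exists>k\<in>K. c k \<noteq> 0" "\<forall>i\<in>I. (\<Sum>k\<in>K. c k * fs i (inv k)) = 0"
    using homogeneous_system_nontrivial_solution[of I K "\<lambda>k i. fs i (inv k)"] assms(4,5)
    by auto
  then obtain j where j: "j \<in> K" "c j \<noteq> 0" by blast
  have collapse: "scale (indicator H (inv k \<otimes> j)) (g j) = (if k = j then g j else 0)"
    if "k \<in> K" for k
  proof -
    have "inv k \<otimes> j \<in> H \<longleftrightarrow> k = j"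
    proof
      assume "inv k \<otimes> j \<in> H"
      then have "k <# H = j <# H"
        using l_coset_eqI H K_carrier that j(1) by blast
      then show "k = j"
        using inj_onD[OF distinct_cosets] that j(1) by blast
    next
      assume "k = j"
      then show "inv k \<otimes> j \<in> H"
        using K_carrier j(1) subgroup.one_closed[OF H] by auto
    qed
    then show ?thesis by (simp add: indicator_def)
  qed
  have "scale (c j) (g j) = (\<Sum>k\<in>K. if k = j then scale (c j) (g j) else 0)"
    using assms(5) j(1) by simp
  also have "\<dots> = (\<Sum>k\<in>K. scale (c k) (scale (indicator H (inv k \<otimes> j)) (g j)))"
    using collapse by (intro sum.cong) auto
  also have "\<dots> = (\<Sum>k\<in>K. scale (c k) (\<Sum>i\<in>I. scale (fs i (inv k)) (gs i j)))"
    using expansion subsetD[OF K_carrier] j(1) by (intro sum.cong) auto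
  also have "\<dots> = (\<Sum>k\<in>K. \<Sum>i\<in>I. scale (c k * fs i (inv k)) (gs i j))"
    by (simp add: V.scale_sum_right)
  also have "\<dots> = (\<Sum>i\<in>I. scale (\<Sum>k\<in>K. c k * fs i (inv k)) (gs i j))"
    by (subst sum.swap) (simp add: V.scale_sum_left)
  also have "\<dots> = 0"
    using c(2) by simp
  finally show False
    using j nonzero by simp
qed

theorem lemma1p6:
  fixes G :: "('g, 'b) monoid_scheme"
    and H :: "'g set"
    and scale :: "complex \<Rightarrow> 'a :: ab_group_add \<Rightarrow> 'a"
    and g :: "'g \<Rightarrow> 'a"
    and gs :: "nat \<Rightarrow> 'g \<Rightarrow> 'a"
    and fs :: "nat \<Rightarrow> 'g \<Rightarrow> complex"
    and n :: nat
  assumes "vector_space scale"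
    and "group G"
    and "subgroup H G"
    and "\<forall>x\<in>carrier G. \<forall>y\<in>carrier G.
           scale (indicator H (x \<otimes>\<^bsub>G\<^esub> y)) (g y)
           = (\<Sum>i\<in>{1..n}. scale (fs i x) (gs i y))"
  shows "\<exists>F. finite F \<and> F \<subseteq> carrier G \<and>
           (\<forall>y\<in>carrier G. y \<notin> F <#>\<^bsub>G\<^esub> H \<longrightarrow> g y = 0)"
proof -
  define S where "S = {y \<in> carrier G. g y \<noteq> 0}"
  have "S \<subseteq> carrier G"
    by (simp add: S_def)
  moreover have "finite ((\<lambda>y. y <#\<^bsub>G\<^esub> H) ` S)"
  proof (rule finite_image_if_inj_on_subsets_card_bounded)
    fix K assume "K \<subseteq> S" "finite K" "inj_on (\<lambda>y. y <#\<^bsub>G\<^esub> H) K"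
    then show "card K \<le> n"
      using group.card_support_in_distinct_l_cosets_le[OF assms(2,1,3,4)]
      by (simp add: S_def subset_iff)
  qed
  ultimately have "\<exists>F. finite F \<and> F \<subseteq> S \<and> S \<subseteq> F <#>\<^bsub>G\<^esub> H"
    by (rule group.finite_l_coset_representatives[OF assms(2,3)])
  then obtain F where F: "finite F" "F \<subseteq> S" "S \<subseteq> F <#>\<^bsub>G\<^esub> H"
    by blast
  show ?thesis
  proof (intro exI conjI ballI impI)
    show "finite F" "F \<subseteq> carrier G"
      using F(1,2) by (auto simp: S_def)
    show "g y = 0" if "y \<in> carrier G" "y \<notin> F <#>\<^bsub>G\<^esub> H" for y
      using that F(3) by (auto simp: S_def)
  qed
qed

end
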